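(* Let $F$ be a $4$-regular graph, let $D$ be a directed version of $F$, let $B$ be a strictly fundamental cycle basis of $F$, and let $\mathbf o$ be a transitional orientation of $F$. Then $\mathrm{CM}(F,B,D)\cdot\Delta_{D,\mathbf o}$ is totally transversally unimodular.
   Context: Graphs: $G=(V,H,E,\epsilon)$ with finite sets of vertices $V$ and half-edges $H$, a partition $E$ of $H$ into unordered pairs (edges), and $\epsilon:H\to V$; loops and multiple edges allowed. A directed version orders each edge as (tail, head). A single transition is an unordered pair of distinct half-edges incident with a common vertex; a directed single transition is such an ordered pair. A closed walk is a sequence $((h_1,h_2),\dots,(h_{n-1},h_n))$ of directed single transitions with $\{h_2,h_3\},\{h_4,h_5\},\dots,\{h_n,h_1\}$ edges, up to cyclic shift. $\sigma(D,W)\in\mathbb Z^{E}$ counts, at each edge, traversals by $W$ along its direction in $D$ minus traversals against it. An oriented circuit is a nonempty closed walk in which each half-edge occurs at most once; a circuit is one with orientation forgotten. For a maximal forest $T$ of $G$ and $e\notin T$, the fundamental circuit of $e$ is the unique circuit whose only edge outside $T$ is $e$; a strictly fundamental cycle basis w.r.t. $T$ is the set of these fundamental circuits, each with an arbitrary orientation. $\mathrm{CM}(G,\Gamma,D)$ is the $\Gamma\times E(G)$ matrix whose row indexed by $W\in\Gamma$ is $\sigma(D,W)$. $F$ is $4$-regular if every vertex is incident with exactly $4$ half-edges. A transition at $v$ is a partition of the four half-edges at $v$ into two single transitions; $\mathfrak T(F)$ is the set of all transitions, and a transversal of $\mathfrak T(F)$ is a set containing exactly one transition at each vertex. A transitional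 orientation $\mathbf o$ assigns to each transition $t$ one of its two single transitions $\mathbf o(t)$. $\Delta_{D,\mathbf o}$ is the $E(F)\times\mathfrak T(F)$ matrix over $\mathbb Q$ whose $(e,t)$ entry is $1$ if $e\cap\mathbf o(t)=\{h\}$ with $h$ the tail of $e$ in $D$, $-1$ if $e\cap\mathbf o(t)=\{h\}$ with $h$ the head, and $0$ otherwise. An $X\times\mathfrak T(F)$ matrix is totally transversally unimodular if for every transversal $T$ of $\mathfrak T(F)$, its submatrix of columns in $T$ is totally unimodular (every square submatrix has determinant in $\{-1,0,1\}$). *)

theory Defs
  imports Main "Jordan_Normal_Form.Determinant"
begin

definition is_graph :: "'v set \<Rightarrow> 'h set \<Rightarrow> 'h set set \<Rightarrow> ('h \<Rightarrow> 'v) \<Rightarrow> bool" where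
  "is_graph V H E eps \<longleftrightarrow> finite V \<and> finite H \<and> eps ` H \<subseteq> V \<and>
     (\<forall>e\<in>E. card e = 2) \<and> \<Union>E = H \<and>
     (\<forall>e1\<in>E. \<forall>e2\<in>E. e1 \<noteq> e2 \<longrightarrow> e1 \<inter> e2 = {})"

definition half_edges_at :: "'h set \<Rightarrow> ('h \<Rightarrow> 'v) \<Rightarrow> 'v \<Rightarrow> 'h set" where
  "half_edges_at H eps v = {h \<in> H. eps h = v}"

definition four_regular :: "'v set \<Rightarrow> 'h set \<Rightarrow> ('h \<Rightarrow> 'v) \<Rightarrow> bool" where
  "four_regular V H eps \<longleftrightarrow> (\<forall>v\<in>V. card (half_edges_at H eps v) = 4)"

text \<open>A directed version is encoded by the set Tl of tail half-edges:
each edge contains exactly one tail; the other half-edge is its head.\<close>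

definition directed_version :: "'h set \<Rightarrow> 'h set set \<Rightarrow> 'h set \<Rightarrow> bool" where
  "directed_version H E Tl \<longleftrightarrow> Tl \<subseteq> H \<and> (\<forall>e\<in>E. card (e \<inter> Tl) = 1)"

text \<open>A closed walk ((h1,h2),...,(h_{n-1},h_n)) is represented by the list of its
directed single transitions (a representative of the cyclic-shift class).
Edge number i of the walk is {snd (W!i), fst (W!((i+1) mod n))}, traversed from
the half-edge snd (W!i) to the half-edge fst (W!((i+1) mod n)).\<close>

definition directed_single_transition :: "'h set \<Rightarrow> ('h \<Rightarrow> 'v) \<Rightarrow> 'h \<times> 'h \<Rightarrow> bool" where
  "directed_single_transition H eps p \<longleftrightarrow>
     fst p \<in> H \<and> snd p \<in> H \<and> fst p \<noteq> snd p \<and> eps (fst p) = eps (snd p)"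

definition walk_edge :: "('h \<times> 'h) list \<Rightarrow> nat \<Rightarrow> 'h set" where
  "walk_edge W i = {snd (W ! i), fst (W ! (Suc i mod length W))}"

definition closed_walk :: "'h set \<Rightarrow> 'h set set \<Rightarrow> ('h \<Rightarrow> 'v) \<Rightarrow> ('h \<times> 'h) list \<Rightarrow> bool" where
  "closed_walk H E eps W \<longleftrightarrow>
     (\<forall>p\<in>set W. directed_single_transition H eps p) \<and>
     (\<forall>i<length W. walk_edge W i \<in> E)"

definition walk_half_edges :: "('h \<times> 'h) list \<Rightarrow> 'h list" where
  "walk_half_edges W = concat (map (\<lambda>p. [fst p, snd p]) W)"

definition oriented_circuit :: "'h set \<Rightarrow> 'h set set \<Rightarrow> ('h \<Rightarrow> 'v) \<Rightarrow> ('h \<times> 'h) list \<Rightarrow> bool" where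
  "oriented_circuit H E eps W \<longleftrightarrow>
     W \<noteq> [] \<and> closed_walk H E eps W \<and> distinct (walk_half_edges W)"

definition walk_edges :: "('h \<times> 'h) list \<Rightarrow> 'h set set" where
  "walk_edges W = {walk_edge W i | i. i < length W}"

text \<open>sigma(D,W)(e): traversals of e along its direction minus traversals against it.\<close>

definition sigma :: "'h set \<Rightarrow> ('h \<times> 'h) list \<Rightarrow> 'h set \<Rightarrow> int" where
  "sigma Tl W e =
     int (card {i. i < length W \<and> walk_edge W i = e \<and> snd (W ! i) \<in> Tl})
   - int (card {i. i < length W \<and> walk_edge W i = e \<and> snd (W ! i) \<notin> Tl})"

definition forest :: "'h set \<Rightarrow> 'h set set \<Rightarrow> ('h \<Rightarrow> 'v) \<Rightarrow> 'h set set \<Rightarrow> bool" where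
  "forest H E eps T \<longleftrightarrow> T \<subseteq> E \<and>
     \<not> (\<exists>W. oriented_circuit H E eps W \<and> walk_edges W \<subseteq> T)"

definition maximal_forest :: "'h set \<Rightarrow> 'h set set \<Rightarrow> ('h \<Rightarrow> 'v) \<Rightarrow> 'h set set \<Rightarrow> bool" where
  "maximal_forest H E eps T \<longleftrightarrow> forest H E eps T \<and>
     (\<forall>e\<in>E - T. \<not> forest H E eps (insert e T))"

text \<open>A strictly fundamental cycle basis w.r.t. T, indexed by the non-tree edges:
B e is the fundamental circuit of e (the circuit whose only non-T edge is e),
with an arbitrary orientation.\<close>

definition strictly_fundamental_basis ::
  "'h set \<Rightarrow> 'h set set \<Rightarrow> ('h \<Rightarrow> 'v) \<Rightarrow> 'h set set \<Rightarrow> ('h set \<Rightarrow> ('h \<times> 'h) list) \<Rightarrow> bool" where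
  "strictly_fundamental_basis H E eps T B \<longleftrightarrow> maximal_forest H E eps T \<and>
     (\<forall>e\<in>E - T. oriented_circuit H E eps (B e) \<and> e \<in> walk_edges (B e) \<and>
                walk_edges (B e) \<subseteq> insert e T)"

definition transitions_at :: "'h set \<Rightarrow> ('h \<Rightarrow> 'v) \<Rightarrow> 'v \<Rightarrow> 'h set set set" where
  "transitions_at H eps v = {{s1, s2} | s1 s2.
      s1 \<union> s2 = half_edges_at H eps v \<and> s1 \<inter> s2 = {} \<and> card s1 = 2 \<and> card s2 = 2}"

definition transitions :: "'v set \<Rightarrow> 'h set \<Rightarrow> ('h \<Rightarrow> 'v) \<Rightarrow> 'h set set set" where
  "transitions V H eps = (\<Union>v\<in>V. transitions_at H eps v)"

definition transversal :: "'v set \<Rightarrow> 'h set \<Rightarrow> ('h \<Rightarrow> 'v) \<Rightarrow> 'h set set set \<Rightarrow> bool" where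
  "transversal V H eps S \<longleftrightarrow> S \<subseteq> transitions V H eps \<and>
     (\<forall>v\<in>V. \<exists>!t. t \<in> S \<and> t \<in> transitions_at H eps v)"

definition transitional_orientation ::
  "'v set \<Rightarrow> 'h set \<Rightarrow> ('h \<Rightarrow> 'v) \<Rightarrow> ('h set set \<Rightarrow> 'h set) \<Rightarrow> bool" where
  "transitional_orientation V H eps ori \<longleftrightarrow> (\<forall>t\<in>transitions V H eps. ori t \<in> t)"

definition Delta :: "'h set \<Rightarrow> ('h set set \<Rightarrow> 'h set) \<Rightarrow> 'h set \<Rightarrow> 'h set set \<Rightarrow> rat" where
  "Delta Tl ori e t =
     (if \<exists>h. e \<inter> ori t = {h} \<and> h \<in> Tl then 1
      else if \<exists>h. e \<inter> ori t = {h} \<and> h \<notin> Tl then -1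
      else 0)"

text \<open>The product CM(F,B,D) * Delta_{D,o}; rows indexed by the non-tree edges
(equivalently by the circuits B e), columns by transitions.\<close>

definition CM_Delta ::
  "'h set set \<Rightarrow> 'h set \<Rightarrow> ('h set \<Rightarrow> ('h \<times> 'h) list) \<Rightarrow> ('h set set \<Rightarrow> 'h set)
     \<Rightarrow> 'h set \<Rightarrow> 'h set set \<Rightarrow> rat" where
  "CM_Delta E Tl B ori r t = (\<Sum>e\<in>E. of_int (sigma Tl (B r) e) * Delta Tl ori e t)"

text \<open>A square submatrix is
given by distinct row indices rs and distinct column indices cs of equal length
(reordering rows/columns only changes the sign of the determinant).\<close>

definition totally_unimodular :: "('r \<Rightarrow> 'c \<Rightarrow> rat) \<Rightarrow> 'r set \<Rightarrow> 'c set \<Rightarrow> bool" where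
  "totally_unimodular M R C \<longleftrightarrow>
     (\<forall>rs cs. distinct rs \<and> distinct cs \<and> set rs \<subseteq> R \<and> set cs \<subseteq> C \<and>
        length rs = length cs \<longrightarrow>
        det (mat (length rs) (length cs) (\<lambda>(i, j). M (rs ! i) (cs ! j))) \<in> {-1, 0, 1})"

definition totally_transversally_unimodular ::
  "'v set \<Rightarrow> 'h set \<Rightarrow> ('h \<Rightarrow> 'v) \<Rightarrow> ('r \<Rightarrow> 'h set set \<Rightarrow> rat) \<Rightarrow> 'r set \<Rightarrow> bool" where
  "totally_transversally_unimodular V H eps M R \<longleftrightarrow>
     (\<forall>S. transversal V H eps S \<longrightarrow> totally_unimodular M R S)"

end

theory Submission
  imports Defs
begin

text \<open>Fix a transversal S. Each transition t in S lives at its own vertex v, and the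
  orientation picks a side P of the four half-edges at v. Splitting v into a vertex carrying P
  and one carrying the other two half-edges cuts the component of the forest T through v into
  two parts, because T has no circuit; let X t be the part containing P. Along the fundamental
  circuit of a non-tree edge traversed from x to y, the entry of CM * Delta in column t counts
  with sign how often the circuit leaves P, which telescopes to [x in X t] - [y in X t]. So the
  submatrix for S is a matrix of pairs crossing the sets X t. Among finitely many columns there
  is always one whose vertex has a side with a split component avoiding all other chosen
  vertices; row operations turn that column into a unit column, and induction on the size
  gives total unimodularity, as for network matrices.\<close>

section \<open>Determinants\<close>

definition remove_nth :: "nat \<Rightarrow> 'a list \<Rightarrow> 'a list" where
  "remove_nth k xs = take k xs @ drop (Suc k) xs"

lemma length_remove_nth [simp]: "k < length xs \<Longrightarrow> length (remove_nth k xs) = length xs - 1"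
  unfolding remove_nth_def by auto

lemma nth_remove_nth:
  "k < length xs \<Longrightarrow> i < length xs - 1 \<Longrightarrow> remove_nth k xs ! i = xs ! (if i < k then i else Suc i)"
  unfolding remove_nth_def by (auto simp: nth_append min_def)

lemma set_remove_nth_subset: "set (remove_nth k xs) \<subseteq> set xs"
  unfolding remove_nth_def by (auto dest: in_set_takeD in_set_dropD)

lemma distinct_remove_nth: "distinct xs \<Longrightarrow> distinct (remove_nth k xs)"
  unfolding remove_nth_def using set_take_disj_set_drop_if_distinct[of xs k "Suc k"] by auto

lemma det_add_row_multiples:
  fixes A :: "'a::comm_ring_1 mat"
  assumes A: "A \<in> carrier_mat n n" and i0: "i0 < n" and c0: "c i0 = 0"
  shows "det (mat n n (\<lambda>(i, j). A $$ (i, j) + c i * A $$ (i0, j))) = det A"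
proof -
  let ?A = "\<lambda>k. mat n n (\<lambda>(i, j). A $$ (i, j) + (if i < k then c i else 0) * A $$ (i0, j))"
  have step: "k \<le> n \<Longrightarrow> det (?A k) = det A" for k
  proof (induction k)
    case 0
    have "?A 0 = A"
      using A by (intro eq_matI) auto
    then show ?case by simp
  next
    case (Suc k)
    have "?A (Suc k) = (if k = i0 then ?A k else addrow (c k) k i0 (?A k))"
      using A c0 i0 Suc.prems by (intro eq_matI) (auto simp: algebra_simps less_Suc_eq)
    moreover have "det (?A k) = det A"
      using Suc by simp
    ultimately show ?case
      using det_addrow[OF i0 _ mat_carrier, of k "c k"] by (cases "k = i0") simp_all
  qed
  moreover have "?A n = mat n n (\<lambda>(i, j). A $$ (i, j) + c i * A $$ (i0, j))"
    by (rule eq_matI) auto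
  ultimately show ?thesis
    using step[OF order_refl] by simp
qed

lemma det_eq_cofactor_if_unit_column:
  fixes A :: "'a::comm_ring_1 mat"
  assumes A: "A \<in> carrier_mat n n" and i0: "i0 < n" and j0: "j0 < n"
    and zero: "\<And>i. i < n \<Longrightarrow> i \<noteq> i0 \<Longrightarrow> A $$ (i, j0) = 0"
  shows "det A = A $$ (i0, j0) * cofactor A i0 j0"
proof -
  have "det A = (\<Sum>i<n. A $$ (i, j0) * cofactor A i j0)"
    by (rule laplace_expansion_column[OF A j0])
  also have "\<dots> = A $$ (i0, j0) * cofactor A i0 j0"
    using i0 zero by (subst sum.remove[of _ i0]) (auto intro: sum.neutral)
  finally show ?thesis .
qed

section \<open>Matrices of pairs crossing a family of sets\<close>

definition crossing :: "('c \<Rightarrow> 'x set) \<Rightarrow> 'x \<times> 'x \<Rightarrow> 'c \<Rightarrow> rat" where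
  "crossing X p c = of_bool (fst p \<in> X c) - of_bool (snd p \<in> X c)"

abbreviation crossing_mat :: "('c \<Rightarrow> 'x set) \<Rightarrow> ('x \<times> 'x) list \<Rightarrow> 'c list \<Rightarrow> rat mat" where
  "crossing_mat X ps cs \<equiv> mat (length ps) (length cs) (\<lambda>(i, j). crossing X (ps ! i) (cs ! j))"

lemma crossing_swap: "crossing X (prod.swap p) c = - crossing X p c"
  unfolding crossing_def by simp

lemma mat_delete_crossing_mat:
  assumes "i0 < length ps" and "j0 < length cs"
  shows "mat_delete (crossing_mat X ps cs) i0 j0 = crossing_mat X (remove_nth i0 ps) (remove_nth j0 cs)"
  using assms by (intro eq_matI) (auto simp: mat_delete_def nth_remove_nth)

lemma det_crossing_mat_swap_row:
  assumes i0: "i0 < length ps" and len: "length ps = length cs"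
  shows "det (crossing_mat X (ps[i0 := prod.swap (ps ! i0)]) cs) = - det (crossing_mat X ps cs)"
proof -
  have "crossing_mat X (ps[i0 := prod.swap (ps ! i0)]) cs = multrow i0 (-1) (crossing_mat X ps cs)"
    using i0 by (intro eq_matI) (auto simp: nth_list_update crossing_swap)
  then show ?thesis
    using det_multrow[OF i0, of "crossing_mat X ps cs" "-1"] len by simp
qed

text \<open>Isolating cuts play the role of the leaves of the tree in the classical proof that
  network matrices are totally unimodular.\<close>

definition isolating_cut ::
  "('x \<Rightarrow> 'x \<Rightarrow> bool) \<Rightarrow> ('c \<Rightarrow> 'x set) \<Rightarrow> 'c set \<Rightarrow> 'c \<Rightarrow> 'x set \<Rightarrow> rat \<Rightarrow> bool" where
  "isolating_cut Rel X C c D s \<longleftrightarrow> (s = 1 \<or> s = -1) \<and> (\<forall>x\<in>D. \<forall>y\<in>D. Rel x y) \<and>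
     (\<forall>a b. Rel a b \<longrightarrow> crossing X (a, b) c = s * (of_bool (a \<in> D) - of_bool (b \<in> D))) \<and>
     (\<forall>c'\<in>C - {c}. \<forall>x\<in>D. \<forall>y\<in>D. x \<in> X c' \<longleftrightarrow> y \<in> X c')"

lemma isolating_cut_crossing:
  assumes "isolating_cut Rel X C c D s" and "Rel (fst p) (snd p)"
  shows "crossing X p c = s * (of_bool (fst p \<in> D) - of_bool (snd p \<in> D))"
  using assms unfolding isolating_cut_def by (metis prod.collapse)

definition reroute :: "'x set \<Rightarrow> 'x \<Rightarrow> 'x \<times> 'x \<Rightarrow> 'x \<times> 'x" where
  "reroute D b p = (if fst p \<in> D then b else fst p, if snd p \<in> D then b else snd p)"

locale isolating_cut_pivot =
  fixes Rel :: "'x \<Rightarrow> 'x \<Rightarrow> bool" and X :: "'c \<Rightarrow> 'x set" and C :: "'c set"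
    and c :: 'c and D :: "'x set" and s :: rat and a0 b0 :: 'x
  assumes sym: "symp Rel" and trans: "transp Rel"
    and cut: "isolating_cut Rel X C c D s"
    and a0: "a0 \<in> D" and b0: "b0 \<notin> D" and rel0: "Rel a0 b0"
begin

lemma crossing_pivot: "crossing X (a0, b0) c = s"
  using cut a0 b0 rel0 unfolding isolating_cut_def by simp

lemma related_reroute:
  assumes "Rel (fst p) (snd p)"
  shows "Rel (fst (reroute D b0 p)) (snd (reroute D b0 p))"
proof -
  have "Rel b0 x" if "x \<in> D" for x
    using cut a0 rel0 that sym trans unfolding isolating_cut_def by (meson sympD transpD)
  then show ?thesis
    using assms sym trans unfolding reroute_def by (auto dest: sympD transpD)
qed

lemma crossing_reroute_pivot_column:
  assumes "Rel (fst p) (snd p)"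
  shows "crossing X (reroute D b0 p) c = 0"
  using isolating_cut_crossing[OF cut related_reroute[OF assms]] b0 by (simp add: reroute_def)

lemma crossing_reroute:
  assumes "Rel (fst p) (snd p)" and "c' \<in> C"
  shows "crossing X (reroute D b0 p) c' =
    crossing X p c' - (of_bool (fst p \<in> D) - of_bool (snd p \<in> D)) * crossing X (a0, b0) c'"
proof (cases "c' = c")
  case True
  then show ?thesis
    using crossing_reroute_pivot_column[OF assms(1)] isolating_cut_crossing[OF cut assms(1)]
      crossing_pivot by simp
next
  case False
  then have "x \<in> X c' \<longleftrightarrow> a0 \<in> X c'" if "x \<in> D" for x
    using cut assms(2) a0 that unfolding isolating_cut_def by blast
  then show ?thesis
    unfolding crossing_def reroute_def by auto
qed

definition pivot_rows :: "nat \<Rightarrow> ('x \<times> 'x) list \<Rightarrow> ('x \<times> 'x) list" where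
  "pivot_rows i0 qs = (map (reroute D b0) qs)[i0 := (a0, b0)]"

lemma related_pivot_rows:
  assumes "\<forall>p\<in>set qs. Rel (fst p) (snd p)"
  shows "\<forall>p\<in>set (pivot_rows i0 qs). Rel (fst p) (snd p)"
proof
  fix p
  assume "p \<in> set (pivot_rows i0 qs)"
  then have "p = (a0, b0) \<or> (\<exists>q\<in>set qs. p = reroute D b0 q)"
    using set_update_subset_insert[of "map (reroute D b0) qs" i0 "(a0, b0)"]
    unfolding pivot_rows_def by auto
  then show "Rel (fst p) (snd p)"
    using assms rel0 related_reroute by auto
qed

lemma length_pivot_rows [simp]: "length (pivot_rows i0 qs) = length qs"
  unfolding pivot_rows_def by simp

lemma crossing_mat_pivot_rows:
  assumes len: "length qs = n" "length cs = n" and cs: "set cs \<subseteq> C"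
    and rel: "\<forall>p\<in>set qs. Rel (fst p) (snd p)" and i0: "i0 < n" "qs ! i0 = (a0, b0)"
  shows "crossing_mat X (pivot_rows i0 qs) cs = mat n n (\<lambda>(i, j). crossing_mat X qs cs $$ (i, j) +
    (if i = i0 then 0 else of_bool (snd (qs ! i) \<in> D) - of_bool (fst (qs ! i) \<in> D)) *
      crossing_mat X qs cs $$ (i0, j))" (is "_ = ?M")
proof (rule eq_matI)
  fix i j
  assume "i < dim_row ?M" and "j < dim_col ?M"
  then have i: "i < n" and j: "j < n" by auto
  show "crossing_mat X (pivot_rows i0 qs) cs $$ (i, j) = ?M $$ (i, j)"
  proof (cases "i = i0")
    case True
    then show ?thesis
      using i j i0 len by (simp add: pivot_rows_def)
  next
    case False
    have "cs ! j \<in> C" "Rel (fst (qs ! i)) (snd (qs ! i))"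
      using cs rel i j len by auto
    then show ?thesis
      using crossing_reroute i j i0 len False by (simp add: pivot_rows_def algebra_simps)
  qed
qed (use len in auto)

text \<open>Subtracting suitable multiples of the pivot row makes column c a unit column.\<close>

lemma det_crossing_mat_pivot:
  assumes len: "length qs = n" "length cs = n" and cs: "set cs \<subseteq> C"
    and rel: "\<forall>p\<in>set qs. Rel (fst p) (snd p)"
    and i0: "i0 < n" "qs ! i0 = (a0, b0)" and j0: "j0 < n" "cs ! j0 = c"
  shows "det (crossing_mat X qs cs) =
    s * (-1) ^ (i0 + j0) * det (crossing_mat X (remove_nth i0 (pivot_rows i0 qs)) (remove_nth j0 cs))"
proof -
  let ?A = "crossing_mat X qs cs" and ?A' = "crossing_mat X (pivot_rows i0 qs) cs"
  have rows: "pivot_rows i0 qs ! i = reroute D b0 (qs ! i)" if "i < n" "i \<noteq> i0" for i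
    using that len by (simp add: pivot_rows_def)
  have "det ?A' = det ?A"
    unfolding crossing_mat_pivot_rows[OF assms(1-6)] using len i0 by (intro det_add_row_multiples) auto
  moreover have "det ?A' = s * cofactor ?A' i0 j0"
    using rows
    using det_eq_cofactor_if_unit_column[of ?A' n i0 j0] len i0 j0 rel
    by (simp add: pivot_rows_def crossing_pivot crossing_reroute_pivot_column)
  ultimately show ?thesis
    using mat_delete_crossing_mat[of i0 "pivot_rows i0 qs" j0 cs X] len i0 j0
    by (simp add: cofactor_def)
qed

end

locale crossing_family =
  fixes Rel :: "'x \<Rightarrow> 'x \<Rightarrow> bool" and X :: "'c \<Rightarrow> 'x set" and CC :: "'c set"
  assumes sym: "symp Rel" and trans: "transp Rel"
    and isolating_cut_exists:
      "\<And>C. C \<subseteq> CC \<Longrightarrow> finite C \<Longrightarrow> C \<noteq> {} \<Longrightarrow> \<exists>c\<in>C. \<exists>D s. isolating_cut Rel X C c D s"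
begin

definition admissible :: "('x \<times> 'x) list \<Rightarrow> 'c list \<Rightarrow> bool" where
  "admissible ps cs \<longleftrightarrow>
    length ps = length cs \<and> distinct cs \<and> set cs \<subseteq> CC \<and> (\<forall>p\<in>set ps. Rel (fst p) (snd p))"

lemma det_crossing_mat_pivot_reduce:
  assumes adm: "admissible ps cs" and len: "length cs = Suc m"
    and cut: "isolating_cut Rel X (set cs) c D s" and j0: "j0 < Suc m" "cs ! j0 = c"
    and i0: "i0 < Suc m" "fst (ps ! i0) \<in> D" "snd (ps ! i0) \<notin> D"
  shows "\<exists>ps' cs'. admissible ps' cs' \<and> length cs' = m \<and>
    (det (crossing_mat X ps cs) = det (crossing_mat X ps' cs') \<or>
     det (crossing_mat X ps cs) = - det (crossing_mat X ps' cs'))"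
proof -
  have rel: "\<forall>p\<in>set ps. Rel (fst p) (snd p)" and "length ps = Suc m"
    using adm len by (auto simp: admissible_def)
  interpret isolating_cut_pivot Rel X "set cs" c D s "fst (ps ! i0)" "snd (ps ! i0)"
    using sym trans cut i0 rel \<open>length ps = Suc m\<close> by unfold_locales auto
  let ?ps' = "remove_nth i0 (pivot_rows i0 ps)" and ?cs' = "remove_nth j0 cs"
  have "admissible ?ps' ?cs'"
    unfolding admissible_def
  proof (intro conjI)
    show "length ?ps' = length ?cs'"
      using \<open>length ps = Suc m\<close> len i0 j0 by simp
    show "distinct ?cs'"
      using adm distinct_remove_nth by (auto simp: admissible_def)
    show "set ?cs' \<subseteq> CC"
      using set_remove_nth_subset[of j0 cs] adm by (auto simp: admissible_def)
    show "\<forall>p\<in>set ?ps'. Rel (fst p) (snd p)"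
      using related_pivot_rows[OF rel] set_remove_nth_subset[of i0 "pivot_rows i0 ps"] by blast
  qed
  moreover have "det (crossing_mat X ps cs) = s * (-1) ^ (i0 + j0) * det (crossing_mat X ?ps' ?cs')"
    using \<open>length ps = Suc m\<close> len rel i0 j0 by (intro det_crossing_mat_pivot) auto
  moreover have "s * (-1) ^ (i0 + j0) = 1 \<or> s * (-1) ^ (i0 + j0) = -1"
    using cut by (auto simp: isolating_cut_def minus_one_power_iff)
  ultimately show ?thesis
    using len j0 by (intro exI[of _ ?ps'] exI[of _ ?cs']) auto
qed

lemma admissible_swap_row:
  assumes "admissible ps cs" and "i0 < length ps"
  shows "admissible (ps[i0 := prod.swap (ps ! i0)]) cs"
proof -
  have "Rel (snd (ps ! i0)) (fst (ps ! i0))"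
    using assms sym by (simp add: admissible_def sympD)
  then have "\<forall>p\<in>set (ps[i0 := prod.swap (ps ! i0)]). Rel (fst p) (snd p)"
    using assms set_update_subset_insert[of ps i0 "prod.swap (ps ! i0)"] by (auto simp: admissible_def)
  then show ?thesis
    using assms by (simp add: admissible_def)
qed

lemma det_crossing_mat_eq_0_if_uncrossed:
  assumes adm: "admissible ps cs" and cut: "isolating_cut Rel X C c D s"
    and j0: "j0 < length cs" "cs ! j0 = c" and uncrossed: "\<forall>p\<in>set ps. fst p \<in> D \<longleftrightarrow> snd p \<in> D"
  shows "det (crossing_mat X ps cs) = 0"
proof (cases ps)
  case Nil
  then show ?thesis
    using adm j0 by (simp add: admissible_def)
next
  case (Cons p ps')
  have "crossing X q c = 0" if "q \<in> set ps" for q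
    using isolating_cut_crossing[OF cut] adm uncrossed that by (simp add: admissible_def)
  then show ?thesis
    using det_eq_cofactor_if_unit_column[of "crossing_mat X ps cs" "length ps" 0 j0] adm j0 Cons
    by (simp add: admissible_def)
qed

lemma det_crossing_mat_reduce:
  assumes adm: "admissible ps cs" and len: "length cs = Suc m"
  shows "det (crossing_mat X ps cs) = 0 \<or> (\<exists>ps' cs'. admissible ps' cs' \<and> length cs' = m \<and>
    (det (crossing_mat X ps cs) = det (crossing_mat X ps' cs') \<or>
     det (crossing_mat X ps cs) = - det (crossing_mat X ps' cs')))"
proof -
  have lens: "length ps = Suc m"
    using adm len by (simp add: admissible_def)
  have "set cs \<noteq> {}"
    using len by auto
  then obtain c D s where c: "c \<in> set cs" and cut: "isolating_cut Rel X (set cs) c D s"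
    using isolating_cut_exists[of "set cs"] adm by (auto simp: admissible_def)
  obtain j0 where j0: "j0 < Suc m" "cs ! j0 = c"
    using c len by (metis in_set_conv_nth)
  consider (leaving) i0 where "i0 < Suc m" "fst (ps ! i0) \<in> D" "snd (ps ! i0) \<notin> D"
    | (entering) i0 where "i0 < Suc m" "fst (ps ! i0) \<notin> D" "snd (ps ! i0) \<in> D"
    | (uncrossed) "\<forall>p\<in>set ps. fst p \<in> D \<longleftrightarrow> snd p \<in> D"
    using lens by (metis in_set_conv_nth)
  then show ?thesis
  proof cases
    case leaving
    then show ?thesis
      using det_crossing_mat_pivot_reduce[OF adm len cut j0] by blast
  next
    case entering
    let ?qs = "ps[i0 := prod.swap (ps ! i0)]"
    have "\<exists>ps' cs'. admissible ps' cs' \<and> length cs' = m \<and>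
        (det (crossing_mat X ?qs cs) = det (crossing_mat X ps' cs') \<or>
         det (crossing_mat X ?qs cs) = - det (crossing_mat X ps' cs'))"
      using entering lens admissible_swap_row[OF adm]
      by (intro det_crossing_mat_pivot_reduce[OF _ len cut j0]) auto
    moreover have "det (crossing_mat X ?qs cs) = - det (crossing_mat X ps cs)"
      using entering(1) lens len by (intro det_crossing_mat_swap_row) auto
    ultimately show ?thesis
      by (metis equation_minus_iff)
  next
    case uncrossed
    then show ?thesis
      using det_crossing_mat_eq_0_if_uncrossed[OF adm cut] j0 len by simp
  qed
qed

lemma det_crossing_mat_unimodular:
  "admissible ps cs \<Longrightarrow> det (crossing_mat X ps cs) \<in> {-1, 0, 1}"
proof (induction "length cs" arbitrary: ps cs)
  case 0
  then show ?case
    by (simp add: admissible_def)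
next
  case (Suc m)
  then show ?case
    using det_crossing_mat_reduce[OF Suc.prems Suc.hyps(2)[symmetric]] Suc.hyps(1) by force
qed

lemma totally_unimodular_crossing:
  assumes "\<forall>r\<in>R. Rel (fst (pair r)) (snd (pair r))"
  shows "totally_unimodular (\<lambda>r. crossing X (pair r)) R CC"
  unfolding totally_unimodular_def
proof (intro allI impI)
  fix rs cs
  assume "distinct rs \<and> distinct cs \<and> set rs \<subseteq> R \<and> set cs \<subseteq> CC \<and> length rs = length cs"
  moreover have "mat (length rs) (length cs) (\<lambda>(i, j). crossing X (pair (rs ! i)) (cs ! j)) =
      crossing_mat X (map pair rs) cs"
    by (intro eq_matI) auto
  ultimately show "det (mat (length rs) (length cs) (\<lambda>(i, j). crossing X (pair (rs ! i)) (cs ! j)))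
      \<in> {-1, 0, 1}"
    using det_crossing_mat_unimodular[of "map pair rs" cs] assms by (auto simp: admissible_def)
qed

end

lemma totally_unimodular_cong:
  assumes "\<And>r c. r \<in> R \<Longrightarrow> c \<in> C \<Longrightarrow> M r c = M' r c"
  shows "totally_unimodular M R C \<longleftrightarrow> totally_unimodular M' R C"
proof -
  have "mat (length rs) (length cs) (\<lambda>(i, j). M (rs ! i) (cs ! j)) =
      mat (length rs) (length cs) (\<lambda>(i, j). M' (rs ! i) (cs ! j))"
    if "set rs \<subseteq> R" "set cs \<subseteq> C" for rs cs
    using that nth_mem by (intro eq_matI) (auto intro!: assms)
  then show ?thesis
    unfolding totally_unimodular_def by metis
qed

section \<open>Shortest chains\<close>

lemma successively_conv_nth:
  "successively R xs \<longleftrightarrow> (\<forall>i. Suc i < length xs \<longrightarrow> R (xs ! i) (xs ! Suc i))"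
proof (induction R xs rule: successively.induct)
  case (3 x y xs)
  then show ?case
    by (auto simp: less_Suc_eq_0_disj)
qed simp_all

lemma successively_take: "successively R xs \<Longrightarrow> successively R (take k xs)"
  using successively_append_iff[of R "take k xs" "drop k xs"] by simp

lemma successively_drop: "successively R xs \<Longrightarrow> successively R (drop k xs)"
  using successively_append_iff[of R "take k xs" "drop k xs"] by simp

lemma last_take_conv_nth: "0 < i \<Longrightarrow> i \<le> length xs \<Longrightarrow> last (take i xs) = xs ! (i - 1)"
  by (subst last_conv_nth) (auto simp: min_def)

definition linking_chain :: "('a \<Rightarrow> 'a \<Rightarrow> bool) \<Rightarrow> 'a set \<Rightarrow> 'a set \<Rightarrow> 'a list \<Rightarrow> bool" where
  "linking_chain R A B xs \<longleftrightarrow> xs \<noteq> [] \<and> hd xs \<in> A \<and> last xs \<in> B \<and> successively R xs"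

definition shortest_linking_chain :: "('a \<Rightarrow> 'a \<Rightarrow> bool) \<Rightarrow> 'a set \<Rightarrow> 'a set \<Rightarrow> 'a list \<Rightarrow> bool" where
  "shortest_linking_chain R A B xs \<longleftrightarrow>
    linking_chain R A B xs \<and> (\<forall>ys. linking_chain R A B ys \<longrightarrow> length xs \<le> length ys)"

lemma shortest_linking_chain_exists:
  assumes "R\<^sup>*\<^sup>* a b" and "a \<in> A" and "b \<in> B"
  shows "\<exists>xs. shortest_linking_chain R A B xs"
proof -
  have "\<exists>xs. xs \<noteq> [] \<and> hd xs = a \<and> last xs = y \<and> successively R xs" if "R\<^sup>*\<^sup>* a y" for y
    using that
  proof (induction rule: rtranclp_induct)
    case base
    show ?case
      by (intro exI[of _ "[a]"]) simp
  next
    case (step y z)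
    then obtain xs where "xs \<noteq> []" "hd xs = a" "last xs = y" "successively R xs"
      by blast
    with step.hyps(2) show ?case
      by (intro exI[of _ "xs @ [z]"]) (simp add: successively_append_iff)
  qed
  then have "\<exists>xs. linking_chain R A B xs"
    using assms unfolding linking_chain_def by blast
  then show ?thesis
    unfolding shortest_linking_chain_def by (metis ex_has_least_nat)
qed

lemma linking_chain_cut:
  assumes xs: "linking_chain R A B xs" and ij: "i \<le> j" "j < length xs"
    and start: "i = 0 \<Longrightarrow> xs ! j \<in> A" and link: "0 < i \<Longrightarrow> R (xs ! (i - 1)) (xs ! j)"
  shows "linking_chain R A B (take i xs @ drop j xs)"
proof -
  have "hd (take i xs @ drop j xs) \<in> A"
    using xs ij start by (cases "i = 0") (auto simp: linking_chain_def hd_drop_conv_nth)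
  moreover have "successively R (take i xs @ drop j xs)"
  proof -
    have "R (last (take i xs)) (xs ! j)" if "0 < i"
      using link that ij last_take_conv_nth[of i xs] by simp
    then show ?thesis
      using xs ij by (auto simp: linking_chain_def successively_append_iff successively_take
          successively_drop hd_drop_conv_nth)
  qed
  ultimately show ?thesis
    using xs ij by (simp add: linking_chain_def)
qed

lemma linking_chain_take:
  assumes "linking_chain R A B xs" and "i < length xs" and "xs ! i \<in> B"
  shows "linking_chain R A B (take (Suc i) xs)"
  using assms by (auto simp: linking_chain_def successively_take last_take_conv_nth)

context
  fixes R :: "'a \<Rightarrow> 'a \<Rightarrow> bool" and A B :: "'a set" and xs :: "'a list"
  assumes shortest: "shortest_linking_chain R A B xs"
begin

lemma shortest_linking_chain_link: "Suc i < length xs \<Longrightarrow> R (xs ! i) (xs ! Suc i)"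
  using shortest by (simp add: shortest_linking_chain_def linking_chain_def successively_conv_nth)

lemma shortest_linking_chain_distinct: "distinct xs"
proof (rule ccontr)
  assume "\<not> distinct xs"
  then obtain i j where ij: "i < j" "j < length xs" "xs ! i = xs ! j"
    by (metis distinct_conv_nth linorder_neqE_nat)
  have "linking_chain R A B (take i xs @ drop j xs)"
  proof (rule linking_chain_cut)
    show "linking_chain R A B xs"
      using shortest by (simp add: shortest_linking_chain_def)
    show "xs ! j \<in> A" if "i = 0"
      using shortest that ij by (auto simp: shortest_linking_chain_def linking_chain_def hd_conv_nth)
    show "R (xs ! (i - 1)) (xs ! j)" if "0 < i"
      using shortest_linking_chain_link[of "i - 1"] that ij by simp
  qed (use ij in auto)
  then show False
    using shortest ij unfolding shortest_linking_chain_def by fastforce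
qed

lemma shortest_linking_chain_no_shortcut:
  assumes "Suc (Suc i) < length xs"
  shows "\<not> R (xs ! i) (xs ! Suc (Suc i))"
proof
  assume "R (xs ! i) (xs ! Suc (Suc i))"
  then have "linking_chain R A B (take (Suc i) xs @ drop (Suc (Suc i)) xs)"
    using shortest assms by (intro linking_chain_cut) (auto simp: shortest_linking_chain_def)
  then show False
    using shortest assms unfolding shortest_linking_chain_def by fastforce
qed

lemma shortest_linking_chain_not_source:
  assumes "0 < i" and "i < length xs"
  shows "xs ! i \<notin> A"
proof
  assume "xs ! i \<in> A"
  then have "linking_chain R A B (take 0 xs @ drop i xs)"
    using shortest assms by (intro linking_chain_cut) (auto simp: shortest_linking_chain_def)
  then show False
    using shortest assms unfolding shortest_linking_chain_def by fastforce
qed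

lemma shortest_linking_chain_not_target:
  assumes "Suc i < length xs"
  shows "xs ! i \<notin> B"
proof
  assume "xs ! i \<in> B"
  then have "linking_chain R A B (take (Suc i) xs)"
    using shortest assms by (intro linking_chain_take) (auto simp: shortest_linking_chain_def)
  then show False
    using shortest assms unfolding shortest_linking_chain_def by fastforce
qed

end

section \<open>Walks, sigma and Delta\<close>

lemma walk_half_edges_Cons: "walk_half_edges (p # W) = fst p # snd p # walk_half_edges W"
  unfolding walk_half_edges_def by simp

lemma length_walk_half_edges [simp]: "length (walk_half_edges W) = 2 * length W"
  by (induction W) (auto simp: walk_half_edges_Cons walk_half_edges_def)

lemma nth_walk_half_edges:
  "i < 2 * length W \<Longrightarrow>
    walk_half_edges W ! i = (if even i then fst (W ! (i div 2)) else snd (W ! (i div 2)))"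
proof (induction W arbitrary: i)
  case Nil
  then show ?case by simp
next
  case (Cons p W)
  then show ?case
    by (cases i rule: nat.exhaust[case_product nat.exhaust])
      (auto simp: walk_half_edges_Cons nth_Cons split: nat.splits)
qed

definition walk_edge_from :: "('h \<times> 'h) list \<Rightarrow> nat \<Rightarrow> 'h" where
  "walk_edge_from W i = snd (W ! i)"

definition walk_edge_to :: "('h \<times> 'h) list \<Rightarrow> nat \<Rightarrow> 'h" where
  "walk_edge_to W i = fst (W ! (Suc i mod length W))"

lemma walk_edge_eq: "walk_edge W i = {walk_edge_from W i, walk_edge_to W i}"
  unfolding walk_edge_def walk_edge_from_def walk_edge_to_def ..

lemma walk_edge_index_unique:
  assumes dist: "distinct (walk_half_edges W)" and i: "i < length W" and j: "j < length W"
    and eq: "walk_edge W i = walk_edge W j"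
  shows "i = j"
proof -
  let ?L = "walk_half_edges W"
  have from_nth: "walk_edge_from W k = ?L ! (2 * k + 1)" if "k < length W" for k
    using that by (simp add: nth_walk_half_edges walk_edge_from_def)
  have to_nth: "walk_edge_to W k = ?L ! (2 * (Suc k mod length W))" if "k < length W" for k
  proof -
    have "Suc k mod length W < length W"
      using that by (intro mod_less_divisor) linarith
    then show ?thesis
      by (simp add: nth_walk_half_edges walk_edge_to_def)
  qed
  have mod_less: "Suc j mod length W < length W"
    using j by (intro mod_less_divisor) linarith
  have "walk_edge_from W i = walk_edge_from W j \<or> walk_edge_from W i = walk_edge_to W j"
    using eq by (auto simp: walk_edge_eq doubleton_eq_iff)
  then have "2 * i + 1 = 2 * j + 1 \<or> 2 * i + 1 = 2 * (Suc j mod length W)"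
    using dist i j mod_less by (auto simp: from_nth to_nth nth_eq_iff_index_eq)
  moreover have "2 * i + 1 \<noteq> 2 * x" for x :: nat
    by presburger
  ultimately show ?thesis
    by auto
qed

lemma mod_Suc_add_neq:
  fixes i k n :: nat
  assumes "i < n" and "Suc k < n"
  shows "(Suc i + k) mod n \<noteq> i"
proof (cases "Suc i + k < n")
  case True
  then show ?thesis
    by simp
next
  case False
  then have "(Suc i + k) mod n = Suc i + k - n"
    using assms by (simp add: le_mod_geq)
  then show ?thesis
    using assms False by simp
qed

lemma sum_lessThan_rotate:
  fixes g :: "nat \<Rightarrow> 'a::comm_monoid_add"
  assumes "0 < n"
  shows "(\<Sum>i<n. g (Suc i mod n)) = (\<Sum>i<n. g i)"
proof -
  obtain m where n: "n = Suc m"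
    using assms gr0_implies_Suc by blast
  have "(\<Sum>i<Suc m. g (Suc i mod Suc m)) = (\<Sum>i<m. g (Suc i)) + g 0"
    by (simp add: sum.cong[OF refl, of "{..<m}" "\<lambda>i. g (Suc i mod Suc m)" "\<lambda>i. g (Suc i)"])
  also have "\<dots> = (\<Sum>i<Suc m. g i)"
    by (simp only: sum.lessThan_Suc_shift add.commute)
  finally show ?thesis
    using n by simp
qed

definition transition_pairs :: "'h list \<Rightarrow> ('h \<times> 'h) list" where
  "transition_pairs g = map (\<lambda>j. (g ! (2 * j), g ! (2 * j + 1))) [0..<length g div 2]"

lemma walk_half_edges_transition_pairs:
  assumes "even (length g)"
  shows "walk_half_edges (transition_pairs g) = g"
proof (rule nth_equalityI)
  show "length (walk_half_edges (transition_pairs g)) = length g"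
    using assms by (simp add: transition_pairs_def)
  fix i
  assume "i < length (walk_half_edges (transition_pairs g))"
  then have "i < 2 * (length g div 2)"
    by (simp add: transition_pairs_def)
  then show "walk_half_edges (transition_pairs g) ! i = g ! i"
    by (auto simp: nth_walk_half_edges transition_pairs_def elim!: evenE oddE)
qed

lemma oriented_circuit_transition_pairs:
  assumes F: "F \<subseteq> E" and dist: "distinct g" and len: "length g = 2 * N" and N: "0 < N"
    and transition: "\<And>j. j < N \<Longrightarrow> directed_single_transition H eps (g ! (2 * j), g ! (2 * j + 1))"
    and edge: "\<And>j. j < N \<Longrightarrow> {g ! (2 * j + 1), g ! ((2 * j + 2) mod (2 * N))} \<in> F"
  shows "oriented_circuit H E eps (transition_pairs g) \<and> walk_edges (transition_pairs g) \<subseteq> F"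
proof -
  let ?W = "transition_pairs g"
  have lenW: "length ?W = N"
    using len by (simp add: transition_pairs_def)
  have nthW: "?W ! j = (g ! (2 * j), g ! (2 * j + 1))" if "j < N" for j
    using that len by (simp add: transition_pairs_def)
  have "walk_edge ?W j \<in> F" if "j < N" for j
  proof -
    have "2 * (Suc j mod N) = (2 * j + 2) mod (2 * N)"
      by (simp add: mult_mod_right)
    then have "walk_edge ?W j = {g ! (2 * j + 1), g ! ((2 * j + 2) mod (2 * N))}"
      using that N lenW nthW[of j] nthW[of "Suc j mod N"] by (simp add: walk_edge_def)
    then show ?thesis
      using edge that by simp
  qed
  moreover have "distinct (walk_half_edges ?W)"
    using dist len by (simp add: walk_half_edges_transition_pairs)
  moreover have "directed_single_transition H eps p" if "p \<in> set ?W" for p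
    using that transition lenW nthW by (metis in_set_conv_nth)
  ultimately show ?thesis
    using F lenW N unfolding oriented_circuit_def closed_walk_def walk_edges_def by auto
qed

lemma fundamental_circuit_other_edge:
  assumes W: "oriented_circuit H E eps W" "walk_edges W \<subseteq> insert r T"
    and i0: "i0 < length W" "walk_edge W i0 = r" and i: "i < length W" "i \<noteq> i0"
  shows "walk_edge W i \<in> T"
proof -
  have "distinct (walk_half_edges W)"
    using W(1) by (simp add: oriented_circuit_def)
  then have "walk_edge W i \<noteq> r"
    using walk_edge_index_unique[of W i i0] i i0 by auto
  moreover have "walk_edge W i \<in> insert r T"
    using W(2) i unfolding walk_edges_def by blast
  ultimately show ?thesis
    by blast
qed

lemma sum_sigma_mult:
  fixes f :: "'h set \<Rightarrow> rat"
  assumes "finite E" and "\<forall>i<length W. walk_edge W i \<in> E"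
  shows "(\<Sum>e\<in>E. of_int (sigma Tl W e) * f e) =
    (\<Sum>i<length W. (if walk_edge_from W i \<in> Tl then 1 else -1) * f (walk_edge W i))"
proof -
  define sg :: "nat \<Rightarrow> rat" where "sg i = (if walk_edge_from W i \<in> Tl then 1 else -1)" for i
  have "of_int (sigma Tl W e) = (\<Sum>i | i < length W \<and> walk_edge W i = e. sg i)" for e
  proof -
    let ?I = "{i. i < length W \<and> walk_edge W i = e}"
    have "(\<Sum>i\<in>?I. sg i) = (\<Sum>i\<in>?I \<inter> {i. snd (W ! i) \<in> Tl}. 1) + (\<Sum>i\<in>?I \<inter> - {i. snd (W ! i) \<in> Tl}. -1)"
      unfolding sg_def walk_edge_from_def by (rule sum.If_cases) simp
    also have "\<dots> = of_nat (card (?I \<inter> {i. snd (W ! i) \<in> Tl})) - of_nat (card (?I \<inter> - {i. snd (W ! i) \<in> Tl}))"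
      by (simp add: sum_negf)
    finally show ?thesis
      unfolding sigma_def by (simp add: Int_def)
  qed
  then have "(\<Sum>e\<in>E. of_int (sigma Tl W e) * f e) =
      (\<Sum>e\<in>E. \<Sum>i | i \<in> {..<length W} \<and> walk_edge W i = e. sg i * f (walk_edge W i))"
    by (auto simp: sum_distrib_right intro!: sum.cong)
  also have "\<dots> = (\<Sum>i<length W. sg i * f (walk_edge W i))"
    using assms by (intro sum.group) auto
  finally show ?thesis
    unfolding sg_def .
qed

lemma Delta_eq_sign: "e \<inter> ori t = {h} \<Longrightarrow> Delta Tl ori e t = (if h \<in> Tl then 1 else -1)"
  unfolding Delta_def by auto

lemma Delta_eq_0: "(\<And>h. e \<inter> ori t \<noteq> {h}) \<Longrightarrow> Delta Tl ori e t = 0"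
  unfolding Delta_def by auto

lemma Delta_directed_edge:
  assumes "directed_version H E Tl" and "{x, y} \<in> E" and "x \<noteq> y"
  shows "(if x \<in> Tl then 1 else -1) * Delta Tl ori {x, y} t = of_bool (x \<in> ori t) - of_bool (y \<in> ori t)"
proof -
  have "card ({x, y} \<inter> Tl) = 1"
    using assms(1,2) unfolding directed_version_def by blast
  then have tail: "x \<in> Tl \<longleftrightarrow> y \<notin> Tl"
    using assms(3) by (cases "x \<in> Tl"; cases "y \<in> Tl") auto
  consider "x \<in> ori t" "y \<notin> ori t" | "x \<notin> ori t" "y \<in> ori t" | "x \<in> ori t \<longleftrightarrow> y \<in> ori t"
    by blast
  then show ?thesis
  proof cases
    case 1
    then have "{x, y} \<inter> ori t = {x}"
      by auto
    then show ?thesis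
      using 1 by (simp add: Delta_eq_sign)
  next
    case 2
    then have "{x, y} \<inter> ori t = {y}"
      using assms(3) by auto
    then show ?thesis
      using 2 tail by (cases "y \<in> Tl") (simp_all add: Delta_eq_sign)
  next
    case 3
    have "{x, y} \<inter> ori t \<noteq> {h}" for h
    proof
      assume h: "{x, y} \<inter> ori t = {h}"
      then have "h \<in> ori t" "h = x \<or> h = y"
        by auto
      then have "{x, y} \<subseteq> {x, y} \<inter> ori t"
        using 3 by auto
      then have "{x, y} \<subseteq> {h}"
        by (simp only: h)
      then show False
        using assms(3) by simp
    qed
    then show ?thesis
      using 3 by (simp add: Delta_eq_0)
  qed
qed

lemma sum_walk_edge_crossings:
  assumes "W \<noteq> []"
  shows "(\<Sum>i<length W. of_bool (walk_edge_from W i \<in> S) - of_bool (walk_edge_to W i \<in> S)) =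
    (\<Sum>i<length W. of_bool (snd (W ! i) \<in> S) - of_bool (fst (W ! i) \<in> S) :: rat)"
proof -
  have "(\<Sum>i<length W. of_bool (walk_edge_to W i \<in> S)) = (\<Sum>i<length W. of_bool (fst (W ! i) \<in> S) :: rat)"
    unfolding walk_edge_to_def
    using sum_lessThan_rotate[of "length W" "\<lambda>i. of_bool (fst (W ! i) \<in> S) :: rat"] assms by simp
  then show ?thesis
    by (simp add: sum_subtractf walk_edge_from_def)
qed

section \<open>Split forests\<close>

locale graph_forest =
  fixes V :: "'v set" and H :: "'h set" and E :: "'h set set" and eps :: "'h \<Rightarrow> 'v"
    and T :: "'h set set"
  assumes graph: "is_graph V H E eps" and forest: "forest H E eps T"
begin

lemma tree_edges_subset: "T \<subseteq> E"
  using forest unfolding forest_def by simp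

lemma finite_half_edges: "finite H"
  using graph unfolding is_graph_def by simp

lemma edge_subset: "e \<in> E \<Longrightarrow> e \<subseteq> H"
  using graph unfolding is_graph_def by auto

lemma finite_edges: "finite E"
  using finite_half_edges edge_subset by (meson Pow_iff finite_Pow_iff finite_subset subsetI)

lemma edges_disjoint: "e1 \<in> E \<Longrightarrow> e2 \<in> E \<Longrightarrow> x \<in> e1 \<Longrightarrow> x \<in> e2 \<Longrightarrow> e1 = e2"
  using graph unfolding is_graph_def by blast

lemma edge_ends_distinct: "{x, y} \<in> E \<Longrightarrow> x \<noteq> y"
  using graph unfolding is_graph_def by fastforce

text \<open>The classes of tree_link are the components of the forest T (as sets of half-edges);
  split_link v P describes the forest obtained by splitting the vertex v into one vertex
  carrying the half-edges in P and one carrying the other half-edges at v.\<close>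

definition tree_link :: "'h \<Rightarrow> 'h \<Rightarrow> bool" where
  "tree_link x y \<longleftrightarrow> {x, y} \<in> T \<or> (x \<in> H \<and> y \<in> H \<and> eps x = eps y)"

definition split_link :: "'v \<Rightarrow> 'h set \<Rightarrow> 'h \<Rightarrow> 'h \<Rightarrow> bool" where
  "split_link v P x y \<longleftrightarrow>
    {x, y} \<in> T \<or> (x \<in> H \<and> y \<in> H \<and> eps x = eps y \<and> (eps x = v \<longrightarrow> (x \<in> P \<longleftrightarrow> y \<in> P)))"

definition split_component :: "'v \<Rightarrow> 'h set \<Rightarrow> 'h \<Rightarrow> 'h set" where
  "split_component v P d = {x. (split_link v P)\<^sup>*\<^sup>* d x}"

lemma symp_tree_link: "symp tree_link"
  unfolding tree_link_def by (auto intro: sympI simp: insert_commute)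

lemma symp_split_link: "symp (split_link v P)"
  unfolding split_link_def by (auto intro: sympI simp: insert_commute)

lemma tree_link_if_split_link: "split_link v P x y \<Longrightarrow> tree_link x y"
  unfolding split_link_def tree_link_def by auto

lemma split_link_half_edges: "split_link v P x y \<Longrightarrow> x \<in> H \<and> y \<in> H"
  unfolding split_link_def using tree_edges_subset edge_subset by blast

lemma split_link_at_other_vertex:
  "x \<in> half_edges_at H eps u \<Longrightarrow> y \<in> half_edges_at H eps u \<Longrightarrow> u \<noteq> v \<Longrightarrow> split_link v P x y"
  unfolding split_link_def half_edges_at_def by auto

lemma split_link_transfer:
  "split_link w P' y z \<Longrightarrow> y \<notin> half_edges_at H eps v \<Longrightarrow> split_link v P y z"
  unfolding split_link_def half_edges_at_def by auto

lemma split_link_vertex_step: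
  "split_link v P x y \<Longrightarrow> {x, y} \<notin> T \<Longrightarrow>
    x \<in> H \<and> y \<in> H \<and> eps x = eps y \<and> (eps x = v \<longrightarrow> (x \<in> P \<longleftrightarrow> y \<in> P))"
  unfolding split_link_def by blast

context
  fixes v P xs
  assumes xs: "shortest_linking_chain (split_link v P) P (half_edges_at H eps v - P) xs"
    and P: "P \<subseteq> half_edges_at H eps v"
begin

lemma shortest_split_chain_first_step: "Suc 0 < length xs \<Longrightarrow> {xs ! 0, xs ! Suc 0} \<in> T"
proof (rule ccontr)
  assume len: "Suc 0 < length xs" and "{xs ! 0, xs ! Suc 0} \<notin> T"
  then have "eps (xs ! 0) = v \<longrightarrow> (xs ! 0 \<in> P \<longleftrightarrow> xs ! Suc 0 \<in> P)"
    using split_link_vertex_step shortest_linking_chain_link[OF xs] by blast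
  moreover have "xs ! 0 \<in> P"
    using xs by (auto simp: shortest_linking_chain_def linking_chain_def hd_conv_nth)
  moreover have "xs ! Suc 0 \<notin> P"
    using shortest_linking_chain_not_source[OF xs, of 1] len by simp
  ultimately show False
    using P by (auto simp: half_edges_at_def)
qed

lemma shortest_split_chain_no_consecutive_tree_steps:
  assumes "Suc (Suc i) < length xs" and "{xs ! i, xs ! Suc i} \<in> T"
  shows "{xs ! Suc i, xs ! Suc (Suc i)} \<notin> T"
proof
  assume "{xs ! Suc i, xs ! Suc (Suc i)} \<in> T"
  then have "{xs ! i, xs ! Suc i} = {xs ! Suc i, xs ! Suc (Suc i)}" "xs ! i \<noteq> xs ! Suc i"
    using assms(2) tree_edges_subset edges_disjoint edge_ends_distinct by blast+
  then have "xs ! i = xs ! Suc (Suc i)"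
    by (metis doubleton_eq_iff)
  then show False
    using shortest_linking_chain_distinct[OF xs] assms(1) by (simp add: nth_eq_iff_index_eq)
qed

lemma shortest_split_chain_no_consecutive_vertex_steps:
  assumes "Suc (Suc i) < length xs" and "{xs ! i, xs ! Suc i} \<notin> T"
  shows "{xs ! Suc i, xs ! Suc (Suc i)} \<in> T"
proof (rule ccontr)
  assume "{xs ! Suc i, xs ! Suc (Suc i)} \<notin> T"
  then have "split_link v P (xs ! i) (xs ! Suc (Suc i))"
    using split_link_vertex_step[OF shortest_linking_chain_link[OF xs, of i]]
      split_link_vertex_step[OF shortest_linking_chain_link[OF xs, of "Suc i"]] assms
    unfolding split_link_def by auto
  then show False
    using shortest_linking_chain_no_shortcut[OF xs assms(1)] by blast
qed

lemma shortest_split_chain_alternates: "Suc i < length xs \<Longrightarrow> {xs ! i, xs ! Suc i} \<in> T \<longleftrightarrow> even i"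
proof (induction i)
  case 0
  then show ?case
    using shortest_split_chain_first_step by simp
next
  case (Suc i)
  then show ?case
    using shortest_split_chain_no_consecutive_tree_steps[of i]
      shortest_split_chain_no_consecutive_vertex_steps[of i] by auto
qed

lemma shortest_split_chain_last_step:
  assumes m: "length xs = Suc (Suc m)"
  shows "{xs ! m, xs ! Suc m} \<in> T"
proof (rule ccontr)
  assume "{xs ! m, xs ! Suc m} \<notin> T"
  then have "xs ! m \<in> H" "eps (xs ! m) = eps (xs ! Suc m)"
    "eps (xs ! m) = v \<longrightarrow> (xs ! m \<in> P \<longleftrightarrow> xs ! Suc m \<in> P)"
    using split_link_vertex_step shortest_linking_chain_link[OF xs, of m] m by auto
  moreover have "xs ! Suc m \<in> half_edges_at H eps v - P"
    using xs m by (auto simp: shortest_linking_chain_def linking_chain_def last_conv_nth)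
  moreover have "xs ! m \<notin> half_edges_at H eps v - P"
    using shortest_linking_chain_not_target[OF xs, of m] m by simp
  ultimately show False
    by (auto simp: half_edges_at_def)
qed

lemma shortest_split_chain_odd_step:
  assumes "Suc i < length xs" and "odd i"
  shows "directed_single_transition H eps (xs ! i, xs ! Suc i)"
proof -
  have "{xs ! i, xs ! Suc i} \<notin> T"
    using shortest_split_chain_alternates assms by simp
  then have "xs ! i \<in> H \<and> xs ! Suc i \<in> H \<and> eps (xs ! i) = eps (xs ! Suc i)"
    using split_link_vertex_step shortest_linking_chain_link[OF xs] assms(1) by blast
  moreover have "xs ! i \<noteq> xs ! Suc i"
    using shortest_linking_chain_distinct[OF xs] assms(1) by (simp add: nth_eq_iff_index_eq)
  ultimately show ?thesis
    by (simp add: directed_single_transition_def)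
qed

lemma shortest_split_chain_even:
  obtains N where "length xs = 2 * N" and "0 < N"
proof -
  define m where "m = length xs - 1"
  have ends: "xs ! 0 \<in> P" "xs ! m \<in> half_edges_at H eps v - P" and len: "length xs = Suc m"
    using xs by (auto simp: shortest_linking_chain_def linking_chain_def hd_conv_nth last_conv_nth m_def)
  then have "0 < m"
    by (cases m) auto
  then have "{xs ! (m - 1), xs ! m} \<in> T"
    using shortest_split_chain_last_step[of "m - 1"] len by simp
  then have "even (m - 1)"
    using shortest_split_chain_alternates[of "m - 1"] len \<open>0 < m\<close> by simp
  then obtain k where "m - 1 = 2 * k"
    by (rule evenE)
  then show ?thesis
    using that[of "Suc k"] len \<open>0 < m\<close> by simp
qed

text \<open>A shortest chain from one side of the split vertex to the other, closed up at that
  vertex, is a circuit of the forest.\<close>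

lemma shortest_split_chain_circuit:
  assumes N: "length xs = 2 * N" "0 < N"
  defines "g \<equiv> last xs # butlast xs"
  shows "oriented_circuit H E eps (transition_pairs g) \<and> walk_edges (transition_pairs g) \<subseteq> T"
proof (rule oriented_circuit_transition_pairs)
  define m where "m = 2 * N - 1"
  have len: "length xs = Suc m" and "0 < m"
    using N unfolding m_def by simp_all
  have "xs \<noteq> []"
    using len by auto
  then have g: "g = xs ! m # take m xs"
    using len unfolding g_def by (simp add: last_conv_nth butlast_conv_take)
  have g_Suc: "g ! Suc i = xs ! i" if "i < m" for i
    using that len by (simp add: g)
  have distinct: "distinct xs"
    by (rule shortest_linking_chain_distinct[OF xs])
  then have "distinct (take m xs @ [xs ! m])"
    using len take_Suc_conv_app_nth[of m xs] by simp
  then show "distinct g"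
    by (simp add: g)
  show "length g = 2 * N"
    using len N by (simp add: g)
  show "directed_single_transition H eps (g ! (2 * j), g ! (2 * j + 1))" if "j < N" for j
  proof (cases j)
    case 0
    have "xs ! 0 \<in> P" "xs ! m \<in> half_edges_at H eps v - P"
      using xs len by (auto simp: shortest_linking_chain_def linking_chain_def hd_conv_nth last_conv_nth)
    then show ?thesis
      using 0 P distinct len \<open>0 < m\<close>
      by (auto simp: g directed_single_transition_def half_edges_at_def nth_eq_iff_index_eq)
  next
    case (Suc k)
    then have "2 * k + 2 < m"
      using that unfolding m_def by auto
    then show ?thesis
      using shortest_split_chain_odd_step[of "2 * k + 1"] g_Suc[of "2 * k + 1"] g_Suc[of "2 * k + 2"] len Suc
      by simp
  qed
  show "{g ! (2 * j + 1), g ! ((2 * j + 2) mod (2 * N))} \<in> T" if "j < N" for j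
  proof -
    have "g ! ((2 * j + 2) mod (2 * N)) = xs ! (2 * j + 1)"
    proof (cases "Suc j < N")
      case True
      then show ?thesis
        using g_Suc[of "2 * j + 1"] unfolding m_def by simp
    next
      case False
      then have "N = Suc j"
        using that by simp
      then have "m = 2 * j + 1" "(2 * j + 2) mod (2 * N) = 0"
        unfolding m_def by simp_all
      then show ?thesis
        by (simp add: g)
    qed
    then show ?thesis
      using g_Suc[of "2 * j"] shortest_split_chain_alternates[of "2 * j"] that len unfolding m_def by simp
  qed
qed (use tree_edges_subset N in auto)

end

lemma split_sides_disconnected:
  assumes P: "P \<subseteq> half_edges_at H eps v" and p: "p \<in> P"
    and q: "q \<in> half_edges_at H eps v" "q \<notin> P"
  shows "\<not> (split_link v P)\<^sup>*\<^sup>* p q"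
proof
  assume "(split_link v P)\<^sup>*\<^sup>* p q"
  then obtain xs where xs: "shortest_linking_chain (split_link v P) P (half_edges_at H eps v - P) xs"
    using shortest_linking_chain_exists[of "split_link v P" p q P "half_edges_at H eps v - P"] p q
    by blast
  then obtain N where "length xs = 2 * N" "0 < N"
    using P by (rule shortest_split_chain_even)
  then show False
    using shortest_split_chain_circuit[OF xs P] forest unfolding forest_def by blast
qed

lemma split_component_at_split_vertex:
  assumes P: "P \<subseteq> half_edges_at H eps v" and p: "p \<in> P" and h: "h \<in> half_edges_at H eps v"
  shows "h \<in> split_component v P p \<longleftrightarrow> h \<in> P"
proof
  assume "h \<in> split_component v P p"
  then show "h \<in> P"
    using split_sides_disconnected[OF P p h] by (auto simp: split_component_def)
next
  assume "h \<in> P"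
  then have "split_link v P p h"
    using P p unfolding split_link_def half_edges_at_def by auto
  then show "h \<in> split_component v P p"
    by (simp add: split_component_def)
qed

lemma split_component_link:
  assumes "split_link v P x y"
  shows "x \<in> split_component v P d \<longleftrightarrow> y \<in> split_component v P d"
proof -
  have "split_link v P y x"
    using assms symp_split_link by (blast dest: sympD)
  then show ?thesis
    using assms unfolding split_component_def by (auto intro: rtranclp.rtrancl_into_rtrancl)
qed

lemma sum_sigma_Delta_eq_crossings:
  assumes dv: "directed_version H E Tl" and W: "closed_walk H E eps W"
  shows "(\<Sum>e\<in>E. of_int (sigma Tl W e) * Delta Tl ori e t) =
    (\<Sum>i<length W. of_bool (walk_edge_from W i \<in> ori t) - of_bool (walk_edge_to W i \<in> ori t))"
proof -
  have edges: "\<forall>i<length W. walk_edge W i \<in> E"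
    using W unfolding closed_walk_def by blast
  then have "(\<Sum>e\<in>E. of_int (sigma Tl W e) * Delta Tl ori e t) =
      (\<Sum>i<length W. (if walk_edge_from W i \<in> Tl then 1 else -1) * Delta Tl ori (walk_edge W i) t)"
    using finite_edges by (intro sum_sigma_mult)
  also have "\<dots> = (\<Sum>i<length W. of_bool (walk_edge_from W i \<in> ori t) - of_bool (walk_edge_to W i \<in> ori t))"
  proof (rule sum.cong)
    fix i
    assume "i \<in> {..<length W}"
    then have "walk_edge W i \<in> E"
      using edges by simp
    then have "{walk_edge_from W i, walk_edge_to W i} \<in> E"
      by (simp add: walk_edge_eq)
    then show "(if walk_edge_from W i \<in> Tl then 1 else -1) * Delta Tl ori (walk_edge W i) t =
        of_bool (walk_edge_from W i \<in> ori t) - of_bool (walk_edge_to W i \<in> ori t)"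
      using Delta_directed_edge[OF dv _ edge_ends_distinct] walk_edge_eq[of W i] by simp
  qed simp
  finally show ?thesis .
qed

lemma transition_crossing_split_component:
  assumes P: "P \<subseteq> half_edges_at H eps v" "p \<in> P"
    and ab: "directed_single_transition H eps (a, b)"
  shows "of_bool (b \<in> P) - of_bool (a \<in> P) =
    (of_bool (b \<in> split_component v P p) - of_bool (a \<in> split_component v P p) :: rat)"
proof (cases "eps a = v")
  case True
  then have "a \<in> half_edges_at H eps v" "b \<in> half_edges_at H eps v"
    using ab by (auto simp: directed_single_transition_def half_edges_at_def)
  then show ?thesis
    using split_component_at_split_vertex[OF P] by simp
next
  case False
  then have "a \<notin> P" "b \<notin> P" "split_link v P a b"
    using ab P unfolding directed_single_transition_def split_link_def half_edges_at_def by auto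
  then show ?thesis
    using split_component_link[of v P a b p] by simp
qed

text \<open>The Delta-weighted sum over W counts how often W leaves the side P of the split vertex;
  as W is closed, this equals how often it leaves the split component of P, and along the
  fundamental circuit only the non-tree edge can do so.\<close>

lemma sum_sigma_Delta_fundamental_circuit:
  assumes dv: "directed_version H E Tl"
    and W: "oriented_circuit H E eps W" "walk_edges W \<subseteq> insert r T"
    and i0: "i0 < length W" "walk_edge W i0 = r"
    and P: "ori t \<subseteq> half_edges_at H eps v" "p \<in> ori t"
  shows "(\<Sum>e\<in>E. of_int (sigma Tl W e) * Delta Tl ori e t) =
    of_bool (walk_edge_from W i0 \<in> split_component v (ori t) p) -
    of_bool (walk_edge_to W i0 \<in> split_component v (ori t) p)"
proof -
  let ?K = "split_component v (ori t) p" and ?n = "length W"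
  have "W \<noteq> []" and walk: "closed_walk H E eps W"
    using W(1) unfolding oriented_circuit_def by simp_all
  have "(\<Sum>e\<in>E. of_int (sigma Tl W e) * Delta Tl ori e t) =
      (\<Sum>i<?n. of_bool (walk_edge_from W i \<in> ori t) - of_bool (walk_edge_to W i \<in> ori t))"
    using dv walk by (rule sum_sigma_Delta_eq_crossings)
  also have "\<dots> = (\<Sum>i<?n. of_bool (snd (W ! i) \<in> ori t) - of_bool (fst (W ! i) \<in> ori t))"
    using \<open>W \<noteq> []\<close> by (rule sum_walk_edge_crossings)
  also have "\<dots> = (\<Sum>i<?n. of_bool (snd (W ! i) \<in> ?K) - of_bool (fst (W ! i) \<in> ?K))"
  proof (rule sum.cong)
    fix i
    assume "i \<in> {..<?n}"
    then have "directed_single_transition H eps (fst (W ! i), snd (W ! i))"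
      using walk nth_mem unfolding closed_walk_def by fastforce
    then show "of_bool (snd (W ! i) \<in> ori t) - of_bool (fst (W ! i) \<in> ori t) =
        (of_bool (snd (W ! i) \<in> ?K) - of_bool (fst (W ! i) \<in> ?K) :: rat)"
      by (rule transition_crossing_split_component[OF P])
  qed simp
  also have "\<dots> = (\<Sum>i<?n. of_bool (walk_edge_from W i \<in> ?K) - of_bool (walk_edge_to W i \<in> ?K))"
    using \<open>W \<noteq> []\<close> by (rule sum_walk_edge_crossings[symmetric])
  also have "\<dots> = of_bool (walk_edge_from W i0 \<in> ?K) - of_bool (walk_edge_to W i0 \<in> ?K)"
  proof -
    have "of_bool (walk_edge_from W i \<in> ?K) - of_bool (walk_edge_to W i \<in> ?K) = (0 :: rat)"
      if "i < ?n" "i \<noteq> i0" for i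
    proof -
      have "{walk_edge_from W i, walk_edge_to W i} \<in> T"
        using fundamental_circuit_other_edge[OF W i0 that] by (simp add: walk_edge_eq)
      then have "split_link v (ori t) (walk_edge_from W i) (walk_edge_to W i)"
        unfolding split_link_def by simp
      then show ?thesis
        using split_component_link[of v "ori t" _ _ p] by simp
    qed
    then show ?thesis
      using i0 by (subst sum.remove[of _ i0]) (auto intro: sum.neutral)
  qed
  finally show ?thesis .
qed

lemma tree_link_next_transition:
  assumes W: "closed_walk H E eps W" and i: "i < length W"
  shows "tree_link (walk_edge_to W i) (walk_edge_from W (Suc i mod length W))"
proof -
  have "Suc i mod length W < length W"
    using i by (intro mod_less_divisor) linarith
  then have "directed_single_transition H eps (W ! (Suc i mod length W))"
    using W nth_mem unfolding closed_walk_def by blast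
  then show ?thesis
    unfolding directed_single_transition_def tree_link_def walk_edge_to_def walk_edge_from_def
    by blast
qed

lemma tree_link_fundamental_circuit_edge:
  assumes W: "oriented_circuit H E eps W" "walk_edges W \<subseteq> insert r T"
    and i0: "i0 < length W" "walk_edge W i0 = r"
  shows "tree_link\<^sup>*\<^sup>* (walk_edge_from W i0) (walk_edge_to W i0)"
proof -
  let ?n = "length W"
  have walk: "closed_walk H E eps W"
    using W(1) by (simp add: oriented_circuit_def)
  have around: "tree_link\<^sup>*\<^sup>* (walk_edge_to W i0) (walk_edge_from W ((Suc i0 + k) mod ?n))"
    if "k < ?n" for k
    using that
  proof (induction k)
    case 0
    then show ?case
      using tree_link_next_transition[OF walk i0(1)] by simp
  next
    case (Suc k)
    define j where "j = (Suc i0 + k) mod ?n"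
    have "j < ?n"
      using i0 unfolding j_def by (intro mod_less_divisor) linarith
    moreover have "j \<noteq> i0"
      unfolding j_def using i0(1) Suc.prems by (rule mod_Suc_add_neq)
    ultimately have j: "j < ?n" "j \<noteq> i0" .
    have "tree_link\<^sup>*\<^sup>* (walk_edge_to W i0) (walk_edge_from W j)"
      using Suc unfolding j_def by simp
    moreover have "tree_link (walk_edge_from W j) (walk_edge_to W j)"
      using fundamental_circuit_other_edge[OF W i0 j] by (simp add: walk_edge_eq tree_link_def)
    moreover have "Suc j mod ?n = (Suc i0 + Suc k) mod ?n"
      unfolding j_def by (simp add: mod_Suc_eq)
    then have "tree_link (walk_edge_to W j) (walk_edge_from W ((Suc i0 + Suc k) mod ?n))"
      using tree_link_next_transition[OF walk j(1)] by simp
    ultimately show ?case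
      by (meson rtranclp.rtrancl_into_rtrancl)
  qed
  have "Suc i0 + (?n - 1) = i0 + ?n"
    using i0 by simp
  then have "(Suc i0 + (?n - 1)) mod ?n = i0"
    using i0 by simp
  moreover have "tree_link\<^sup>*\<^sup>* (walk_edge_to W i0) (walk_edge_from W ((Suc i0 + (?n - 1)) mod ?n))"
    using i0 by (intro around) simp
  ultimately have "tree_link\<^sup>*\<^sup>* (walk_edge_to W i0) (walk_edge_from W i0)"
    by simp
  then show ?thesis
    using sympD[OF symp_rtranclp[OF symp_tree_link]] by blast
qed

lemma split_component_subset_half_edges: "d \<in> H \<Longrightarrow> split_component v P d \<subseteq> H"
proof
  fix x
  assume "d \<in> H" and "x \<in> split_component v P d"
  then have "(split_link v P)\<^sup>*\<^sup>* d x"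
    by (simp add: split_component_def)
  then show "x \<in> H"
    using \<open>d \<in> H\<close> by (induction rule: rtranclp_induct) (auto dest: split_link_half_edges)
qed

lemma split_component_trans:
  assumes "x \<in> split_component v P d"
  shows "x \<in> split_component v P p \<longleftrightarrow> d \<in> split_component v P p"
proof -
  have dx: "(split_link v P)\<^sup>*\<^sup>* d x"
    using assms by (simp add: split_component_def)
  moreover have "(split_link v P)\<^sup>*\<^sup>* x d"
    using sympD[OF symp_rtranclp[OF symp_split_link] dx] .
  ultimately show ?thesis
    unfolding split_component_def using rtranclp_trans[of "split_link v P" p] by blast
qed

lemma split_component_transfer:
  assumes avoid: "\<forall>y\<in>split_component w P' d. y \<notin> half_edges_at H eps v"
  shows "split_component w P' d \<subseteq> split_component v P d"
proof
  fix x
  assume "x \<in> split_component w P' d"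
  then have "(split_link w P')\<^sup>*\<^sup>* d x"
    by (simp add: split_component_def)
  then show "x \<in> split_component v P d"
  proof (induction rule: rtranclp_induct)
    case base
    then show ?case
      by (simp add: split_component_def)
  next
    case (step y z)
    then have "split_link v P y z"
      using avoid split_link_transfer by (auto simp: split_component_def)
    then show ?case
      using step.IH by (auto simp: split_component_def intro: rtranclp.rtrancl_into_rtrancl)
  qed
qed

lemma tree_link_rtranclp_if_split: "(split_link v P)\<^sup>*\<^sup>* a b \<Longrightarrow> tree_link\<^sup>*\<^sup>* a b"
  by (induction rule: rtranclp_induct) (auto intro: rtranclp.rtrancl_into_rtrancl tree_link_if_split_link)

lemma tree_component_split:
  assumes P: "P \<subseteq> half_edges_at H eps v" "p \<in> P" and q: "q \<in> half_edges_at H eps v" "q \<notin> P"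
  shows "tree_link\<^sup>*\<^sup>* p x \<longleftrightarrow> x \<in> split_component v P p \<or> x \<in> split_component v P q"
proof -
  have pq: "tree_link p q"
    using P q unfolding tree_link_def half_edges_at_def by auto
  show ?thesis
  proof
    assume "tree_link\<^sup>*\<^sup>* p x"
    then show "x \<in> split_component v P p \<or> x \<in> split_component v P q"
    proof (induction rule: rtranclp_induct)
      case base
      then show ?case
        by (simp add: split_component_def)
    next
      case (step y z)
      show ?case
      proof (cases "split_link v P y z")
        case True
        then show ?thesis
          using step.IH split_component_link by blast
      next
        case False
        then have "z \<in> half_edges_at H eps v"
          using step.hyps(2) unfolding tree_link_def split_link_def half_edges_at_def by auto
        then have "split_link v P p z \<or> split_link v P q z"
          using P q unfolding split_link_def half_edges_at_def by auto
        then show ?thesis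
          by (auto simp: split_component_def)
      qed
    qed
  next
    assume "x \<in> split_component v P p \<or> x \<in> split_component v P q"
    then show "tree_link\<^sup>*\<^sup>* p x"
    proof
      assume "x \<in> split_component v P p"
      then show ?thesis
        using tree_link_rtranclp_if_split by (simp add: split_component_def)
    next
      assume "x \<in> split_component v P q"
      then have "tree_link\<^sup>*\<^sup>* q x"
        using tree_link_rtranclp_if_split by (simp add: split_component_def)
      with pq show ?thesis
        by (rule converse_rtranclp_into_rtranclp)
    qed
  qed
qed

lemma split_components_disjoint:
  assumes P: "P \<subseteq> half_edges_at H eps v" "p \<in> P" and q: "q \<in> half_edges_at H eps v" "q \<notin> P"
  shows "\<not> (x \<in> split_component v P p \<and> x \<in> split_component v P q)"
  using split_sides_disconnected[OF P q] split_component_trans[of x v P q p]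
  by (auto simp: split_component_def)

lemma split_component_mono:
  "d' \<in> split_component v P d \<Longrightarrow> split_component v P d' \<subseteq> split_component v P d"
  unfolding split_component_def by (auto intro: rtranclp_trans)

text \<open>Take the side of w whose split component does not reach the vertex v.\<close>

lemma split_component_descend:
  assumes h: "h \<in> half_edges_at H eps v"
    and y: "y \<in> split_component v P d" "y \<in> half_edges_at H eps w" and wv: "w \<noteq> v"
    and P': "P' \<subseteq> half_edges_at H eps w" "p' \<in> P'" and q': "q' \<in> half_edges_at H eps w" "q' \<notin> P'"
  obtains d' where "d' = p' \<or> d' = q'" and "split_component w P' d' \<subset> split_component v P d"
proof -
  have at_w: "z \<in> split_component v P d" if "z \<in> half_edges_at H eps w" for z
    using split_component_link[OF split_link_at_other_vertex[OF y(2) that wv]] y(1) by blast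
  define d' where "d' = (if h \<in> split_component w P' p' then q' else p')"
  define o' where "o' = (if h \<in> split_component w P' p' then p' else q')"
  have "h \<notin> split_component w P' d'"
    using split_components_disjoint[OF P' q', of h] unfolding d'_def by auto
  then have avoid: "\<forall>z\<in>split_component w P' d'. z \<notin> half_edges_at H eps v"
    using split_component_link[OF split_link_at_other_vertex[OF _ h wv[symmetric]]] by blast
  have "d' \<in> half_edges_at H eps w" "o' \<in> half_edges_at H eps w"
    using P' q' unfolding d'_def o'_def by auto
  then have "split_component w P' d' \<subseteq> split_component v P d" and "o' \<in> split_component v P d"
    using split_component_transfer[OF avoid] split_component_mono at_w by blast+
  moreover have "o' \<notin> split_component w P' d'"
    using split_sides_disconnected[OF P' q'] sympD[OF symp_rtranclp[OF symp_split_link]]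
    unfolding d'_def o'_def split_component_def by auto
  ultimately have "split_component w P' d' \<subset> split_component v P d"
    by blast
  moreover have "d' = p' \<or> d' = q'"
    unfolding d'_def by simp
  ultimately show ?thesis
    using that by blast
qed

end

section \<open>Transversals\<close>

lemma transitional_orientation_side:
  assumes "transitional_orientation V H eps ori" and "t \<in> transitions V H eps"
  obtains v where "v \<in> V" "t \<in> transitions_at H eps v" "ori t \<subseteq> half_edges_at H eps v"
    "ori t \<noteq> {}" "half_edges_at H eps v - ori t \<noteq> {}"
proof -
  obtain v where v: "v \<in> V" "t \<in> transitions_at H eps v"
    using assms(2) unfolding transitions_def by blast
  then obtain s1 s2 where s: "t = {s1, s2}" "s1 \<union> s2 = half_edges_at H eps v" "s1 \<inter> s2 = {}"
    "card s1 = 2" "card s2 = 2"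
    unfolding transitions_at_def by blast
  then have "ori t = s1 \<or> ori t = s2"
    using assms unfolding transitional_orientation_def by auto
  moreover have "s1 \<noteq> {}" "s2 \<noteq> {}"
    using s(4,5) by auto
  ultimately show ?thesis
    using that[OF v] s(2,3) by blast
qed

locale transversal_forest = graph_forest V H E eps T
  for V :: "'v set" and H :: "'h set" and E :: "'h set set" and eps :: "'h \<Rightarrow> 'v"
    and T :: "'h set set" +
  fixes ori :: "'h set set \<Rightarrow> 'h set" and S :: "'h set set set"
  assumes orientation: "transitional_orientation V H eps ori"
    and transversal: "transversal V H eps S"
begin

definition side_rep :: "'h set set \<Rightarrow> 'h" where
  "side_rep t = (SOME h. h \<in> ori t)"

definition vertex_of :: "'h set set \<Rightarrow> 'v" where
  "vertex_of t = eps (side_rep t)"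

definition other_rep :: "'h set set \<Rightarrow> 'h" where
  "other_rep t = (SOME h. h \<in> half_edges_at H eps (vertex_of t) - ori t)"

definition cut_of :: "'h set set \<Rightarrow> 'h set" where
  "cut_of t = split_component (vertex_of t) (ori t) (side_rep t)"

lemma transversal_side:
  assumes "t \<in> S"
  shows "t \<in> transitions_at H eps (vertex_of t)" "vertex_of t \<in> V"
    "ori t \<subseteq> half_edges_at H eps (vertex_of t)" "side_rep t \<in> ori t"
    "other_rep t \<in> half_edges_at H eps (vertex_of t)" "other_rep t \<notin> ori t"
proof -
  have "t \<in> transitions V H eps"
    using assms transversal unfolding transversal_def by blast
  then obtain v where v: "v \<in> V" "t \<in> transitions_at H eps v" "ori t \<subseteq> half_edges_at H eps v"
    "ori t \<noteq> {}" "half_edges_at H eps v - ori t \<noteq> {}"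
    using transitional_orientation_side[OF orientation] by blast
  then show rep: "side_rep t \<in> ori t"
    unfolding side_rep_def by (simp add: some_in_eq)
  then have "vertex_of t = v"
    using v(3) unfolding vertex_of_def half_edges_at_def by auto
  then show "t \<in> transitions_at H eps (vertex_of t)" "vertex_of t \<in> V"
    "ori t \<subseteq> half_edges_at H eps (vertex_of t)"
    "other_rep t \<in> half_edges_at H eps (vertex_of t)" "other_rep t \<notin> ori t"
    using v someI_ex[of "\<lambda>h. h \<in> half_edges_at H eps v - ori t"] unfolding other_rep_def by auto
qed

lemma inj_on_vertex_of: "inj_on vertex_of S"
proof (rule inj_onI)
  fix t t'
  assume "t \<in> S" "t' \<in> S" "vertex_of t = vertex_of t'"
  then show "t = t'"
    using transversal transversal_side[of t] transversal_side[of t'] unfolding transversal_def by metis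
qed

lemma exists_leaf_component:
  assumes C: "C \<subseteq> S" "finite C" "C \<noteq> {}"
  obtains c d where "c \<in> C" "d = side_rep c \<or> d = other_rep c"
    "\<forall>c'\<in>C - {c}. \<forall>y\<in>split_component (vertex_of c) (ori c) d. y \<notin> half_edges_at H eps (vertex_of c')"
proof -
  let ?K = "\<lambda>(c, d). split_component (vertex_of c) (ori c) d"
  define cand where "cand = {(c, d). c \<in> C \<and> (d = side_rep c \<or> d = other_rep c)}"
  obtain c0 where "c0 \<in> C"
    using C by blast
  then have "(c0, side_rep c0) \<in> cand"
    unfolding cand_def by simp
  then obtain c d where cd: "(c, d) \<in> cand"
    and least: "\<And>c' d'. (c', d') \<in> cand \<Longrightarrow> card (?K (c, d)) \<le> card (?K (c', d'))"
    using ex_has_least_nat[of "\<lambda>x. x \<in> cand" _ "\<lambda>x. card (?K x)"] by force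
  have leaf: "\<forall>c'\<in>C - {c}. \<forall>y\<in>?K (c, d). y \<notin> half_edges_at H eps (vertex_of c')"
  proof (intro ballI notI)
    fix c' y
    assume c': "c' \<in> C - {c}" and y: "y \<in> ?K (c, d)" "y \<in> half_edges_at H eps (vertex_of c')"
    have "c \<in> S" "c' \<in> S"
      using cd c' C unfolding cand_def by auto
    then have "vertex_of c' \<noteq> vertex_of c"
      using c' inj_on_vertex_of by (auto dest: inj_onD)
    then obtain d' where d': "d' = side_rep c' \<or> d' = other_rep c'"
      and smaller: "?K (c', d') \<subset> ?K (c, d)"
      using split_component_descend[of "side_rep c" "vertex_of c" y "ori c" d "vertex_of c'" "ori c'"
          "side_rep c'" "other_rep c'"] y transversal_side[OF \<open>c \<in> S\<close>] transversal_side[OF \<open>c' \<in> S\<close>]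
      by auto
    have "d \<in> H"
      using cd transversal_side[OF \<open>c \<in> S\<close>] unfolding cand_def half_edges_at_def by auto
    then have "finite (?K (c, d))"
      using finite_subset[OF split_component_subset_half_edges finite_half_edges] by simp
    then have "card (?K (c', d')) < card (?K (c, d))"
      using smaller by (rule psubset_card_mono)
    moreover have "(c', d') \<in> cand"
      using c' d' unfolding cand_def by auto
    ultimately show False
      using least by fastforce
  qed
  then show ?thesis
    using that cd unfolding cand_def by auto
qed

lemma crossing_cut_of_other_side:
  assumes t: "t \<in> S" and ab: "tree_link\<^sup>*\<^sup>* a b"
  defines "D \<equiv> split_component (vertex_of t) (ori t) (other_rep t)"
  shows "crossing cut_of (a, b) t = - (of_bool (a \<in> D) - of_bool (b \<in> D))"
proof -
  note side = transversal_side[OF t]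
  have split: "of_bool (x \<in> cut_of t) = (of_bool (tree_link\<^sup>*\<^sup>* (side_rep t) x) :: rat) - of_bool (x \<in> D)"
    for x
    using tree_component_split[OF side(3,4) side(5,6), of x] split_components_disjoint[OF side(3,4) side(5,6), of x]
    unfolding cut_of_def D_def by auto
  have "tree_link\<^sup>*\<^sup>* b a"
    using sympD[OF symp_rtranclp[OF symp_tree_link] ab] .
  then have "tree_link\<^sup>*\<^sup>* (side_rep t) a \<longleftrightarrow> tree_link\<^sup>*\<^sup>* (side_rep t) b"
    using ab rtranclp_trans[of tree_link "side_rep t"] by blast
  then show ?thesis
    using split[of a] split[of b] by (simp add: crossing_def)
qed

lemma cut_of_constant_on_avoiding_component:
  assumes avoid: "\<forall>y\<in>split_component v P d. y \<notin> half_edges_at H eps (vertex_of t)"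
    and x: "x \<in> split_component v P d" and y: "y \<in> split_component v P d"
  shows "x \<in> cut_of t \<longleftrightarrow> y \<in> cut_of t"
proof -
  have "split_component v P d \<subseteq> split_component (vertex_of t) (ori t) d"
    using avoid by (rule split_component_transfer)
  then have "x \<in> split_component (vertex_of t) (ori t) d" "y \<in> split_component (vertex_of t) (ori t) d"
    using x y by blast+
  then show ?thesis
    unfolding cut_of_def using split_component_trans[of _ "vertex_of t" "ori t" d "side_rep t"] by simp
qed

lemma isolating_cut_exists:
  assumes C: "C \<subseteq> S" "finite C" "C \<noteq> {}"
  shows "\<exists>c\<in>C. \<exists>D s. isolating_cut tree_link\<^sup>*\<^sup>* cut_of C c D s"
proof -
  obtain c d where c: "c \<in> C" and d: "d = side_rep c \<or> d = other_rep c"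
    and leaf: "\<forall>c'\<in>C - {c}. \<forall>y\<in>split_component (vertex_of c) (ori c) d.
      y \<notin> half_edges_at H eps (vertex_of c')"
    using exists_leaf_component[OF C] by blast
  define D where "D = split_component (vertex_of c) (ori c) d"
  define s :: rat where "s = (if d = side_rep c then 1 else -1)"
  have within: "\<forall>x\<in>D. \<forall>y\<in>D. tree_link\<^sup>*\<^sup>* x y"
  proof (intro ballI)
    fix x y
    assume "x \<in> D" "y \<in> D"
    then have "tree_link\<^sup>*\<^sup>* d x" "tree_link\<^sup>*\<^sup>* d y"
      unfolding D_def split_component_def by (auto intro: tree_link_rtranclp_if_split)
    then show "tree_link\<^sup>*\<^sup>* x y"
      using sympD[OF symp_rtranclp[OF symp_tree_link]] rtranclp_trans[of tree_link x d y] by blast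
  qed
  have crossing: "crossing cut_of (a, b) c = s * (of_bool (a \<in> D) - of_bool (b \<in> D))"
    if "tree_link\<^sup>*\<^sup>* a b" for a b
  proof (cases "d = side_rep c")
    case True
    then show ?thesis
      by (simp add: D_def s_def cut_of_def crossing_def)
  next
    case False
    then have "d = other_rep c"
      using d by simp
    moreover have "c \<in> S"
      using c C by blast
    ultimately show ?thesis
      using crossing_cut_of_other_side[OF \<open>c \<in> S\<close> that] False by (simp add: D_def s_def)
  qed
  have others: "\<forall>c'\<in>C - {c}. \<forall>x\<in>D. \<forall>y\<in>D. x \<in> cut_of c' \<longleftrightarrow> y \<in> cut_of c'"
  proof (intro ballI)
    fix c' x y
    assume "c' \<in> C - {c}" "x \<in> D" "y \<in> D"
    then show "x \<in> cut_of c' \<longleftrightarrow> y \<in> cut_of c'"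
      using leaf unfolding D_def by (intro cut_of_constant_on_avoiding_component) auto
  qed
  have "s = 1 \<or> s = -1"
    by (simp add: s_def)
  then have "isolating_cut tree_link\<^sup>*\<^sup>* cut_of C c D s"
    unfolding isolating_cut_def using within crossing others by blast
  then show ?thesis
    using c by blast
qed

sublocale crossing_family "tree_link\<^sup>*\<^sup>*" cut_of S
  using symp_rtranclp[OF symp_tree_link] isolating_cut_exists by unfold_locales auto

lemma totally_unimodular_CM_Delta:
  assumes dv: "directed_version H E Tl"
    and B: "\<And>r. r \<in> E - T \<Longrightarrow>
      oriented_circuit H E eps (B r) \<and> r \<in> walk_edges (B r) \<and> walk_edges (B r) \<subseteq> insert r T"
  shows "totally_unimodular (CM_Delta E Tl B ori) (E - T) S"
proof -
  define i0 where "i0 r = (SOME i. i < length (B r) \<and> walk_edge (B r) i = r)" for r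
  have i0: "i0 r < length (B r) \<and> walk_edge (B r) (i0 r) = r" if "r \<in> E - T" for r
  proof -
    have "\<exists>i. i < length (B r) \<and> walk_edge (B r) i = r"
      using B[OF that] unfolding walk_edges_def by blast
    then show ?thesis
      unfolding i0_def by (rule someI_ex)
  qed
  define pair where "pair r = (walk_edge_from (B r) (i0 r), walk_edge_to (B r) (i0 r))" for r
  have "\<forall>r\<in>E - T. tree_link\<^sup>*\<^sup>* (fst (pair r)) (snd (pair r))"
  proof
    fix r
    assume r: "r \<in> E - T"
    then show "tree_link\<^sup>*\<^sup>* (fst (pair r)) (snd (pair r))"
      using tree_link_fundamental_circuit_edge[of "B r" r "i0 r"] B[OF r] i0[OF r]
      unfolding pair_def by simp
  qed
  then have "totally_unimodular (\<lambda>r. crossing cut_of (pair r)) (E - T) S"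
    by (rule totally_unimodular_crossing)
  moreover have "CM_Delta E Tl B ori r t = crossing cut_of (pair r) t"
    if "r \<in> E - T" "t \<in> S" for r t
  proof -
    have "oriented_circuit H E eps (B r)" and "walk_edges (B r) \<subseteq> insert r T"
      using B[OF that(1)] by auto
    from sum_sigma_Delta_fundamental_circuit[where ori = ori and t = t,
        OF dv this conjunct1[OF i0[OF that(1)]] conjunct2[OF i0[OF that(1)]] transversal_side(3,4)[OF that(2)]]
    show ?thesis
      unfolding CM_Delta_def pair_def crossing_def cut_of_def by simp
  qed
  then have "totally_unimodular (CM_Delta E Tl B ori) (E - T) S \<longleftrightarrow>
      totally_unimodular (\<lambda>r. crossing cut_of (pair r)) (E - T) S"
    by (rule totally_unimodular_cong)
  ultimately show ?thesis
    by simp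
qed

end

theorem mainTheorem13:
  fixes V :: "'v set" and H :: "'h set" and E :: "'h set set" and eps :: "'h \<Rightarrow> 'v"
    and Tl :: "'h set" and T :: "'h set set" and B :: "'h set \<Rightarrow> ('h \<times> 'h) list"
    and ori :: "'h set set \<Rightarrow> 'h set"
  assumes "is_graph V H E eps"
    and "four_regular V H eps"
    and "directed_version H E Tl"
    and "strictly_fundamental_basis H E eps T B"
    and "transitional_orientation V H eps ori"
  shows "totally_transversally_unimodular V H eps (CM_Delta E Tl B ori) (E - T)"
  unfolding totally_transversally_unimodular_def
proof (intro allI impI)
  fix S
  assume "transversal V H eps S"
  have "forest H E eps T"
    and basis: "\<And>r. r \<in> E - T \<Longrightarrow>
      oriented_circuit H E eps (B r) \<and> r \<in> walk_edges (B r) \<and> walk_edges (B r) \<subseteq> insert r T"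
    using assms(4) unfolding strictly_fundamental_basis_def maximal_forest_def by auto
  then interpret transversal_forest V H E eps T ori S
    using assms(1,5) \<open>transversal V H eps S\<close> by unfold_locales
  show "totally_unimodular (CM_Delta E Tl B ori) (E - T) S"
    using assms(3) basis by (rule totally_unimodular_CM_Delta)
qed

end
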